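(* Let $G=(V,E)$ be a finite, simple, connected reflective graph, and let $x\sim y$ and $x'\sim y'$ be edges. The following are equivalent: (i) $(x,y)\parallel(x',y')$; (ii) $V_x^y=V_{x'}^{y'}$ and $V_y^x=V_{y'}^{x'}$. In particular, if these conditions hold, then $d(x,z)-d(y,z)=d(x',z)-d(y',z)$ for all $z\in V$.
   Context: $d$ is the combinatorial distance. For adjacent $x\sim y$ let $V_x^y=\{v: d(v,x)<d(v,y)\}$, $V^{xy}=\{v:d(v,x)=d(v,y)\}$. A reflection from $x$ to $y$ is a graph automorphism $\phi$ with $\phi\circ\phi=\mathrm{id}$, $\phi(x)=y$, such that the edges between $V_x^y$ and $V_y^x$ are exactly $\{\{x',\phi(x')\}:x'\in V_x^y\}$ and $\phi$ fixes $V^{xy}$ pointwise. $G$ is reflective if every edge admits a reflection. For edges $x\sim y$, $x'\sim y'$ we write $(x,y)\parallel(x',y')$ if $x'\in V_x^y$ and $y'\in V_y^x$. *)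

theory Defs
  imports Main
begin

definition simple_graph :: "'a set \<Rightarrow> ('a \<Rightarrow> 'a \<Rightarrow> bool) \<Rightarrow> bool" where
  "simple_graph V E \<longleftrightarrow> finite V \<and> (\<forall>u v. E u v \<longrightarrow> u \<in> V \<and> v \<in> V)
     \<and> (\<forall>u v. E u v \<longrightarrow> E v u) \<and> (\<forall>u. \<not> E u u)"

definition walk :: "'a set \<Rightarrow> ('a \<Rightarrow> 'a \<Rightarrow> bool) \<Rightarrow> 'a list \<Rightarrow> bool" where
  "walk V E xs \<longleftrightarrow> xs \<noteq> [] \<and> set xs \<subseteq> V \<and> (\<forall>i < length xs - 1. E (xs ! i) (xs ! Suc i))"

definition connected_graph :: "'a set \<Rightarrow> ('a \<Rightarrow> 'a \<Rightarrow> bool) \<Rightarrow> bool" where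
  "connected_graph V E \<longleftrightarrow> (\<forall>u\<in>V. \<forall>v\<in>V. \<exists>xs. walk V E xs \<and> hd xs = u \<and> last xs = v)"

definition gdist :: "'a set \<Rightarrow> ('a \<Rightarrow> 'a \<Rightarrow> bool) \<Rightarrow> 'a \<Rightarrow> 'a \<Rightarrow> nat" where
  "gdist V E u v = (LEAST n. \<exists>xs. walk V E xs \<and> hd xs = u \<and> last xs = v \<and> length xs = Suc n)"

definition halfspace :: "'a set \<Rightarrow> ('a \<Rightarrow> 'a \<Rightarrow> bool) \<Rightarrow> 'a \<Rightarrow> 'a \<Rightarrow> 'a set" where
  "halfspace V E x y = {v \<in> V. gdist V E v x < gdist V E v y}"

definition midset :: "'a set \<Rightarrow> ('a \<Rightarrow> 'a \<Rightarrow> bool) \<Rightarrow> 'a \<Rightarrow> 'a \<Rightarrow> 'a set" where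
  "midset V E x y = {v \<in> V. gdist V E v x = gdist V E v y}"

definition graph_automorphism :: "'a set \<Rightarrow> ('a \<Rightarrow> 'a \<Rightarrow> bool) \<Rightarrow> ('a \<Rightarrow> 'a) \<Rightarrow> bool" where
  "graph_automorphism V E \<phi> \<longleftrightarrow> bij_betw \<phi> V V \<and> (\<forall>u\<in>V. \<forall>v\<in>V. E u v \<longleftrightarrow> E (\<phi> u) (\<phi> v))"

definition reflection :: "'a set \<Rightarrow> ('a \<Rightarrow> 'a \<Rightarrow> bool) \<Rightarrow> 'a \<Rightarrow> 'a \<Rightarrow> ('a \<Rightarrow> 'a) \<Rightarrow> bool" where
  "reflection V E x y \<phi> \<longleftrightarrow>
     graph_automorphism V E \<phi> \<and> (\<forall>v\<in>V. \<phi> (\<phi> v) = v) \<and> \<phi> x = y \<and>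
     (\<forall>a\<in>halfspace V E x y. \<phi> a \<in> halfspace V E y x \<and> E a (\<phi> a)) \<and>
     (\<forall>a\<in>halfspace V E x y. \<forall>b\<in>halfspace V E y x. E a b \<longrightarrow> b = \<phi> a) \<and>
     (\<forall>v\<in>midset V E x y. \<phi> v = v)"

definition reflective :: "'a set \<Rightarrow> ('a \<Rightarrow> 'a \<Rightarrow> bool) \<Rightarrow> bool" where
  "reflective V E \<longleftrightarrow> (\<forall>x y. E x y \<longrightarrow> (\<exists>\<phi>. reflection V E x y \<phi>))"

definition parallel_edges :: "'a set \<Rightarrow> ('a \<Rightarrow> 'a \<Rightarrow> bool) \<Rightarrow> 'a \<Rightarrow> 'a \<Rightarrow> 'a \<Rightarrow> 'a \<Rightarrow> bool" where
  "parallel_edges V E x y x' y' \<longleftrightarrow> x' \<in> halfspace V E x y \<and> y' \<in> halfspace V E y x"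

end

theory Submission
  imports Defs
begin

(* Let \<phi> be a reflection for the edge xy. Folding V_y^x onto V_x^y (apply \<phi> there, fix every
   other vertex) maps edges to edges or collapses them, so it does not increase distances;
   hence d(z, w) \<le> d(z, \<phi> w) for z, w in V_x^y, which gives V_w^(\<phi> w) \<subseteq> V_x^y and, by the
   symmetric argument, V_(\<phi> w)^w \<subseteq> V_y^x. A parallel edge x'y' is of the form (w, \<phi> w) because
   \<phi> accounts for all edges between the two halfspaces. Conversely, a reflection for x'y' must
   map x to y, and the same inclusions for it give equality. *)

lemma walk_iff_successively:
  "walk V E xs \<longleftrightarrow> xs \<noteq> [] \<and> set xs \<subseteq> V \<and> successively E xs"
  by (auto simp: walk_def successively_conv_nth)

lemma walk_Cons:
  "walk V E (a # xs) \<longleftrightarrow> a \<in> V \<and> (xs = [] \<or> E a (hd xs) \<and> walk V E xs)"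
  by (auto simp: walk_iff_successively successively_Cons)

lemma walk_append:
  assumes "walk V E xs" "walk V E ys" "E (last xs) (hd ys)"
  shows "walk V E (xs @ ys)"
  using assms by (auto simp: walk_iff_successively successively_append_iff)

lemma walk_rev:
  assumes "walk V E xs" "\<And>u v. E u v \<Longrightarrow> E v u"
  shows "walk V E (rev xs)"
  using assms by (auto simp: walk_iff_successively elim: successively_mono)

lemma gdist_le_walk:
  assumes "walk V E xs"
  shows "gdist V E (hd xs) (last xs) \<le> length xs - 1"
proof -
  have "length xs = Suc (length xs - 1)"
    using assms by (cases xs) (auto simp: walk_def)
  then show ?thesis
    unfolding gdist_def using assms by (intro Least_le) blast
qed

lemma gdist_refl: "u \<in> V \<Longrightarrow> gdist V E u u = 0"
  using gdist_le_walk[of V E "[u]"] by (simp add: walk_Cons)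

lemma in_midset_if_notin_halfspaces:
  "v \<in> V \<Longrightarrow> v \<notin> halfspace V E x y \<Longrightarrow> v \<notin> halfspace V E y x \<Longrightarrow> v \<in> midset V E x y"
  by (auto simp: halfspace_def midset_def)

locale connected_simple_graph =
  fixes V :: "'a set" and E :: "'a \<Rightarrow> 'a \<Rightarrow> bool"
  assumes simple: "simple_graph V E" and connected: "connected_graph V E"
begin

lemma edge_in_V: "E u v \<Longrightarrow> u \<in> V \<and> v \<in> V"
  using simple by (simp add: simple_graph_def)

lemma edge_sym: "E u v \<Longrightarrow> E v u"
  using simple by (simp add: simple_graph_def)

lemma edge_irrefl: "\<not> E u u"
  using simple by (simp add: simple_graph_def)

lemma shortest_walk_exists:
  assumes "u \<in> V" "v \<in> V"
  obtains xs where "walk V E xs" "hd xs = u" "last xs = v" "length xs = Suc (gdist V E u v)"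
proof -
  obtain xs where xs: "walk V E xs" "hd xs = u" "last xs = v"
    using connected assms by (auto simp: connected_graph_def)
  then have "length xs = Suc (length xs - 1)"
    by (cases xs) (auto simp: walk_def)
  with xs have "\<exists>n xs. walk V E xs \<and> hd xs = u \<and> last xs = v \<and> length xs = Suc n"
    by blast
  then have "\<exists>xs. walk V E xs \<and> hd xs = u \<and> last xs = v \<and> length xs = Suc (gdist V E u v)"
    unfolding gdist_def by (rule LeastI_ex)
  then show ?thesis
    using that by blast
qed

lemma gdist_edge_le: "E u v \<Longrightarrow> gdist V E u v \<le> 1"
  using gdist_le_walk[of V E "[u, v]"] edge_in_V by (simp add: walk_Cons)

lemma gdist_eq_0_iff:
  assumes "u \<in> V" "v \<in> V"
  shows "gdist V E u v = 0 \<longleftrightarrow> u = v"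
proof
  assume "gdist V E u v = 0"
  then obtain xs where "hd xs = u" "last xs = v" "length xs = 1"
    using shortest_walk_exists[OF assms] by auto
  then show "u = v"
    by (cases xs) auto
qed (simp add: gdist_refl assms)

lemma gdist_edge:
  assumes "E u v"
  shows "gdist V E u v = 1"
proof -
  have "gdist V E u v \<noteq> 0"
    using gdist_eq_0_iff edge_in_V edge_irrefl assms by metis
  with gdist_edge_le[OF assms] show ?thesis
    by simp
qed

lemma gdist_sym:
  assumes "u \<in> V" "v \<in> V"
  shows "gdist V E u v = gdist V E v u"
proof -
  have le: "gdist V E a b \<le> gdist V E b a" if ab: "a \<in> V" "b \<in> V" for a b
  proof -
    obtain xs where xs: "walk V E xs" "hd xs = b" "last xs = a" "length xs = Suc (gdist V E b a)"
      using shortest_walk_exists[OF ab(2,1)] by blast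
    then have "xs \<noteq> []"
      by (simp add: walk_def)
    with xs show ?thesis
      using gdist_le_walk[OF walk_rev[OF xs(1) edge_sym]] by (simp add: hd_rev last_rev)
  qed
  show ?thesis
    using le[OF assms] le[OF assms(2,1)] by simp
qed

lemma gdist_triangle:
  assumes "u \<in> V" "v \<in> V" "w \<in> V"
  shows "gdist V E u w \<le> gdist V E u v + gdist V E v w"
proof -
  obtain xs where xs: "walk V E xs" "hd xs = u" "last xs = v" "length xs = Suc (gdist V E u v)"
    using shortest_walk_exists[OF assms(1,2)] by blast
  obtain ys where ys: "walk V E ys" "hd ys = v" "last ys = w" "length ys = Suc (gdist V E v w)"
    using shortest_walk_exists[OF assms(2,3)] by blast
  have "xs \<noteq> []"
    using xs(1) by (simp add: walk_def)
  show ?thesis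
  proof (cases "tl ys = []")
    case True
    with ys have "v = w"
      by (cases ys) auto
    with xs show ?thesis
      using gdist_le_walk[OF xs(1)] by simp
  next
    case False
    with ys have "walk V E (tl ys)" "E v (hd (tl ys))"
      by (cases ys; auto simp: walk_Cons)+
    then have "walk V E (xs @ tl ys)"
      using walk_append[OF xs(1)] xs(3) by blast
    with xs ys False \<open>xs \<noteq> []\<close> show ?thesis
      using gdist_le_walk[of V E "xs @ tl ys"] by (simp add: last_tl)
  qed
qed

lemma gdist_image_le:
  assumes F_V: "\<And>v. v \<in> V \<Longrightarrow> F v \<in> V"
    and F_edge: "\<And>u v. E u v \<Longrightarrow> gdist V E (F u) (F v) \<le> 1"
    and "u \<in> V" "v \<in> V"
  shows "gdist V E (F u) (F v) \<le> gdist V E u v"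
proof -
  have "gdist V E (F (hd xs)) (F (last xs)) \<le> length xs - 1" if "walk V E xs" for xs
    using that
  proof (induction xs)
    case (Cons a xs)
    show ?case
    proof (cases "xs = []")
      case True
      with Cons.prems show ?thesis
        using gdist_refl[OF F_V] by (simp add: walk_Cons)
    next
      case False
      with Cons.prems have xs: "walk V E xs" "a \<in> V" "E a (hd xs)"
        by (auto simp: walk_Cons)
      then have "hd xs \<in> V" "last xs \<in> V"
        by (auto simp: walk_def)
      then have "gdist V E (F a) (F (last xs))
          \<le> gdist V E (F a) (F (hd xs)) + gdist V E (F (hd xs)) (F (last xs))"
        using gdist_triangle F_V xs(2) by blast
      with F_edge[OF xs(3)] Cons.IH[OF xs(1)] False show ?thesis
        by (cases xs) auto
    qed
  qed (simp add: walk_def)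
  moreover obtain xs where "walk V E xs" "hd xs = u" "last xs = v" "length xs = Suc (gdist V E u v)"
    using shortest_walk_exists[OF assms(3,4)] by blast
  ultimately show ?thesis
    by fastforce
qed

lemma gdist_automorphism:
  assumes aut: "graph_automorphism V E \<phi>" and "u \<in> V" "v \<in> V"
  shows "gdist V E (\<phi> u) (\<phi> v) = gdist V E u v"
proof -
  define \<psi> where "\<psi> = inv_into V \<phi>"
  have bij: "bij_betw \<phi> V V" and iff: "\<And>a b. a \<in> V \<Longrightarrow> b \<in> V \<Longrightarrow> E a b \<longleftrightarrow> E (\<phi> a) (\<phi> b)"
    using aut by (auto simp: graph_automorphism_def)
  have \<phi>_V: "\<phi> a \<in> V" and \<psi>_V: "\<psi> a \<in> V" and \<phi>\<psi>: "\<phi> (\<psi> a) = a" and \<psi>\<phi>: "\<psi> (\<phi> a) = a"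
    if "a \<in> V" for a
    using that bij unfolding \<psi>_def
    by (auto simp: bij_betw_def inv_into_into f_inv_into_f)
  have \<phi>_edge: "E (\<phi> a) (\<phi> b)" if "E a b" for a b
    using iff edge_in_V that by blast
  have \<psi>_edge: "E (\<psi> a) (\<psi> b)" if "E a b" for a b
  proof -
    have "a \<in> V" "b \<in> V"
      using edge_in_V that by auto
    then show ?thesis
      using iff[of "\<psi> a" "\<psi> b"] \<psi>_V \<phi>\<psi> that by simp
  qed
  have "gdist V E (\<phi> u) (\<phi> v) \<le> gdist V E u v"
    using gdist_image_le[of \<phi>, OF \<phi>_V gdist_edge_le[OF \<phi>_edge]] assms by blast
  moreover have "gdist V E (\<psi> (\<phi> u)) (\<psi> (\<phi> v)) \<le> gdist V E (\<phi> u) (\<phi> v)"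
    using gdist_image_le[of \<psi>, OF \<psi>_V gdist_edge_le[OF \<psi>_edge]] \<phi>_V assms by blast
  ultimately show ?thesis
    using \<psi>\<phi> assms by simp
qed

lemma in_own_halfspace:
  assumes "E x y"
  shows "x \<in> halfspace V E x y"
proof -
  have "x \<in> V"
    using edge_in_V assms by blast
  then show ?thesis
    using gdist_refl[of x V E] gdist_edge[OF assms] by (simp add: halfspace_def)
qed

lemma gdist_diff_edge:
  assumes "E a b" "z \<in> V"
  shows "int (gdist V E a z) - int (gdist V E b z) =
    (if z \<in> halfspace V E a b then -1 else if z \<in> halfspace V E b a then 1 else 0)"
proof -
  have V: "a \<in> V" "b \<in> V"
    using edge_in_V assms(1) by auto
  have "gdist V E z a \<le> gdist V E z b + 1" "gdist V E z b \<le> gdist V E z a + 1"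
    using gdist_triangle[OF assms(2) V(2,1)] gdist_triangle[OF assms(2) V]
      gdist_edge[OF assms(1)] gdist_edge[OF edge_sym[OF assms(1)]] by simp_all
  then show ?thesis
    using gdist_sym V assms(2) by (auto simp: halfspace_def)
qed

end

locale edge_reflection = connected_simple_graph +
  fixes x y :: 'a and \<phi> :: "'a \<Rightarrow> 'a"
  assumes edge: "E x y" and reflection: "reflection V E x y \<phi>"
begin

lemma reflection_automorphism: "graph_automorphism V E \<phi>"
  using reflection unfolding reflection_def by blast

lemma reflection_in_V: "v \<in> V \<Longrightarrow> \<phi> v \<in> V"
  using reflection_automorphism bij_betwE unfolding graph_automorphism_def by blast

lemma reflection_involutive: "v \<in> V \<Longrightarrow> \<phi> (\<phi> v) = v"
  using reflection unfolding reflection_def by blast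

lemma reflection_x: "\<phi> x = y"
  using reflection unfolding reflection_def by blast

lemma reflection_y: "\<phi> y = x"
  using reflection_involutive[of x] reflection_x edge edge_in_V by simp

lemma reflection_edge: "E u v \<Longrightarrow> E (\<phi> u) (\<phi> v)"
  using reflection_automorphism edge_in_V unfolding graph_automorphism_def by blast

lemma gdist_reflection: "u \<in> V \<Longrightarrow> v \<in> V \<Longrightarrow> gdist V E (\<phi> u) (\<phi> v) = gdist V E u v"
  using gdist_automorphism[OF reflection_automorphism] .

lemma reflection_halfspace:
  "a \<in> halfspace V E x y \<Longrightarrow> \<phi> a \<in> halfspace V E y x \<and> E a (\<phi> a)"
  using reflection unfolding reflection_def by blast

lemma reflection_crossing_edge:
  "a \<in> halfspace V E x y \<Longrightarrow> b \<in> halfspace V E y x \<Longrightarrow> E a b \<Longrightarrow> b = \<phi> a"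
  using reflection unfolding reflection_def by blast

lemma reflection_fixes:
  "v \<in> V \<Longrightarrow> v \<notin> halfspace V E x y \<Longrightarrow> v \<notin> halfspace V E y x \<Longrightarrow> \<phi> v = v"
  using reflection in_midset_if_notin_halfspaces[of v V E x y] unfolding reflection_def by blast

lemma reflection_halfspace_swap:
  assumes "a \<in> halfspace V E y x"
  shows "\<phi> a \<in> halfspace V E x y"
proof -
  have V: "a \<in> V" "x \<in> V" "y \<in> V"
    using assms edge edge_in_V by (auto simp: halfspace_def)
  have "gdist V E (\<phi> a) x = gdist V E a y" "gdist V E (\<phi> a) y = gdist V E a x"
    using gdist_reflection[of a y] gdist_reflection[of a x] V reflection_x reflection_y by simp_all
  with assms show ?thesis
    using reflection_in_V[OF V(1)] by (simp add: halfspace_def)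
qed

lemma reflection_swap: "reflection V E y x \<phi>"
proof -
  have "midset V E y x = midset V E x y"
    by (auto simp: midset_def)
  moreover have "\<phi> a \<in> halfspace V E x y \<and> E a (\<phi> a)" if "a \<in> halfspace V E y x" for a
  proof -
    have "\<phi> a \<in> halfspace V E x y" "a \<in> V"
      using reflection_halfspace_swap that by (auto simp: halfspace_def)
    then show ?thesis
      using reflection_halfspace[of "\<phi> a"] reflection_involutive edge_sym by simp
  qed
  moreover have "b = \<phi> a"
    if "a \<in> halfspace V E y x" "b \<in> halfspace V E x y" "E a b" for a b
  proof -
    have "a = \<phi> b" "a \<in> V"
      using reflection_crossing_edge that edge_sym by (auto simp: halfspace_def)
    then show ?thesis
      using reflection_involutive that(2) by (auto simp: halfspace_def)
  qed
  ultimately show ?thesis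
    using reflection reflection_y unfolding reflection_def by auto
qed

definition reflection_fold :: "'a \<Rightarrow> 'a" where
  "reflection_fold v = (if v \<in> halfspace V E y x then \<phi> v else v)"

lemma reflection_fold_in_V: "v \<in> V \<Longrightarrow> reflection_fold v \<in> V"
  using reflection_in_V by (simp add: reflection_fold_def)

text \<open>The only edges from \<open>V\<^sub>y\<^sup>x\<close> to \<open>V\<^sub>x\<^sup>y\<close> are the edges \<open>{\<phi> a, a}\<close>, which the fold collapses,
  and \<open>\<phi>\<close> fixes the vertices equidistant from \<open>x\<close> and \<open>y\<close>.\<close>

lemma reflection_fold_edge:
  assumes uv: "E u v"
  shows "reflection_fold u = reflection_fold v \<or> E (reflection_fold u) (reflection_fold v)"
proof -
  have crossing: "reflection_fold a = reflection_fold b \<or> E (reflection_fold a) (reflection_fold b)"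
    if ab: "E a b" and a: "a \<in> halfspace V E y x" and b: "b \<notin> halfspace V E y x" for a b
  proof (cases "b \<in> halfspace V E x y")
    case True
    then have "a = \<phi> b"
      using reflection_crossing_edge a edge_sym ab by blast
    then show ?thesis
      using a b reflection_involutive edge_in_V ab by (simp add: reflection_fold_def)
  next
    case False
    then have "\<phi> b = b"
      using reflection_fixes b edge_in_V ab by blast
    then show ?thesis
      using a b reflection_edge[OF ab] by (simp add: reflection_fold_def)
  qed
  show ?thesis
  proof (cases "u \<in> halfspace V E y x \<longleftrightarrow> v \<in> halfspace V E y x")
    case True
    then show ?thesis
      using reflection_edge[OF uv] uv by (auto simp: reflection_fold_def)
  next
    case False
    then show ?thesis
      using crossing[OF uv] crossing[OF edge_sym[OF uv]]
        edge_sym[of "reflection_fold v" "reflection_fold u"] by metis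
  qed
qed

lemma gdist_le_gdist_reflection:
  assumes z: "z \<in> halfspace V E x y" and w: "w \<in> halfspace V E x y"
  shows "gdist V E z w \<le> gdist V E z (\<phi> w)"
proof -
  have fold_edge: "gdist V E (reflection_fold u) (reflection_fold v) \<le> 1" if "E u v" for u v
    using reflection_fold_edge[OF that] gdist_edge_le reflection_fold_in_V gdist_refl edge_in_V that
    by (metis le_numeral_extra(1) zero_le)
  have "z \<in> V" "\<phi> w \<in> V" "w \<in> V"
    using z w reflection_in_V by (auto simp: halfspace_def)
  then have "gdist V E (reflection_fold z) (reflection_fold (\<phi> w)) \<le> gdist V E z (\<phi> w)"
    using gdist_image_le[of reflection_fold, OF reflection_fold_in_V fold_edge] by blast
  moreover have "reflection_fold z = z" "reflection_fold (\<phi> w) = w"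
    using z w reflection_halfspace reflection_involutive \<open>w \<in> V\<close>
    by (auto simp: reflection_fold_def halfspace_def)
  ultimately show ?thesis
    by simp
qed

lemma gdist_reflection_le_gdist:
  assumes v: "v \<in> V" "v \<notin> halfspace V E x y" and w: "w \<in> halfspace V E x y"
  shows "gdist V E v (\<phi> w) \<le> gdist V E v w"
proof -
  have "w \<in> V"
    using w by (simp add: halfspace_def)
  show ?thesis
  proof (cases "v \<in> halfspace V E y x")
    case True
    then have "gdist V E (\<phi> v) w \<le> gdist V E (\<phi> v) (\<phi> w)"
      using gdist_le_gdist_reflection[OF reflection_halfspace_swap w] by blast
    then show ?thesis
      using gdist_reflection[of v "\<phi> w"] gdist_reflection[of v w] reflection_involutive reflection_in_V
        v \<open>w \<in> V\<close> by simp
  next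
    case False
    then show ?thesis
      using reflection_fixes v gdist_reflection[of v w] \<open>w \<in> V\<close> by simp
  qed
qed

lemma endpoints_in_halfspaces_reflected_edge:
  assumes "w \<in> halfspace V E x y"
  shows "x \<in> halfspace V E w (\<phi> w) \<and> y \<in> halfspace V E (\<phi> w) w"
proof -
  have V: "w \<in> V" "x \<in> V" "y \<in> V"
    using assms edge edge_in_V by (auto simp: halfspace_def)
  have "gdist V E x (\<phi> w) = gdist V E y w" "gdist V E y (\<phi> w) = gdist V E x w"
    using gdist_reflection[of x w] gdist_reflection[of y w] V reflection_x reflection_y by simp_all
  with assms show ?thesis
    using V gdist_sym by (auto simp: halfspace_def)
qed

lemma halfspace_subset: "w \<in> halfspace V E x y \<Longrightarrow> halfspace V E w (\<phi> w) \<subseteq> halfspace V E x y"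
  using gdist_reflection_le_gdist by (fastforce simp: halfspace_def)

lemma edge_reflection_swap: "edge_reflection V E y x \<phi>"
  by (simp add: edge_reflection_axioms_def edge_reflection_def connected_simple_graph_axioms
      edge_sym edge reflection_swap)

end

locale reflective_graph = connected_simple_graph +
  assumes reflective: "reflective V E"
begin

lemma parallel_edges_halfspaces_eq:
  assumes xy: "E x y" and x'y': "E x' y'" and par: "parallel_edges V E x y x' y'"
  shows "halfspace V E x y = halfspace V E x' y' \<and> halfspace V E y x = halfspace V E y' x'"
proof -
  obtain \<phi> where "reflection V E x y \<phi>"
    using reflective xy by (auto simp: reflective_def)
  then interpret \<phi>: edge_reflection V E x y \<phi>
    by unfold_locales (rule xy)
  interpret \<phi>': edge_reflection V E y x \<phi>
    by (rule \<phi>.edge_reflection_swap)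
  have x': "x' \<in> halfspace V E x y" and y': "y' \<in> halfspace V E y x"
    using par by (auto simp: parallel_edges_def)
  then have y'_eq: "y' = \<phi> x'"
    using \<phi>.reflection_crossing_edge x'y' by blast
  obtain \<psi> where "reflection V E x' y' \<psi>"
    using reflective x'y' by (auto simp: reflective_def)
  then interpret \<psi>: edge_reflection V E x' y' \<psi>
    by unfold_locales (rule x'y')
  interpret \<psi>': edge_reflection V E y' x' \<psi>
    by (rule \<psi>.edge_reflection_swap)
  have x: "x \<in> halfspace V E x' y'" and y: "y \<in> halfspace V E y' x'"
    using \<phi>.endpoints_in_halfspaces_reflected_edge[OF x'] y'_eq by auto
  then have "\<psi> x = y"
    using \<psi>.reflection_crossing_edge xy by simp
  then have "halfspace V E x y \<subseteq> halfspace V E x' y'" "halfspace V E y x \<subseteq> halfspace V E y' x'"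
    using \<psi>.halfspace_subset[OF x] \<psi>'.halfspace_subset[OF y] \<psi>.reflection_involutive edge_in_V xy
    by auto
  moreover have "halfspace V E x' y' \<subseteq> halfspace V E x y" "halfspace V E y' x' \<subseteq> halfspace V E y x"
    using \<phi>.halfspace_subset[OF x'] \<phi>'.halfspace_subset[OF y'] y'_eq \<phi>.reflection_involutive
      edge_in_V x'y'
    by auto
  ultimately show ?thesis
    by blast
qed

end

theorem lemma2p3:
  fixes V :: "'a set" and E :: "'a \<Rightarrow> 'a \<Rightarrow> bool" and x y x' y' :: 'a
  assumes "simple_graph V E" and "connected_graph V E" and "reflective V E"
    and "E x y" and "E x' y'"
  shows "(parallel_edges V E x y x' y' \<longleftrightarrow>
            halfspace V E x y = halfspace V E x' y' \<and> halfspace V E y x = halfspace V E y' x')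
       \<and> (parallel_edges V E x y x' y' \<longrightarrow>
            (\<forall>z\<in>V. int (gdist V E x z) - int (gdist V E y z)
                   = int (gdist V E x' z) - int (gdist V E y' z)))"
proof -
  interpret reflective_graph V E
    using assms(1-3) by unfold_locales
  have eq_if_par: "halfspace V E x y = halfspace V E x' y' \<and> halfspace V E y x = halfspace V E y' x'"
    if "parallel_edges V E x y x' y'"
    using parallel_edges_halfspaces_eq assms(4,5) that by blast
  moreover have "parallel_edges V E x y x' y'"
    if "halfspace V E x y = halfspace V E x' y' \<and> halfspace V E y x = halfspace V E y' x'"
    using that in_own_halfspace assms(5) edge_sym by (simp add: parallel_edges_def)
  moreover have "int (gdist V E x z) - int (gdist V E y z) = int (gdist V E x' z) - int (gdist V E y' z)"
    if "parallel_edges V E x y x' y'" "z \<in> V" for z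
    using gdist_diff_edge assms(4,5) eq_if_par that by simp
  ultimately show ?thesis
    by blast
qed

end
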